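(* Let $\varphi=\nu\tilde n.\sigma$ be a frame and $\mathtt{s}\in\tilde n$ a restricted name of $\varphi$ such that $\varphi\nvdash\mathtt{s}$. If $\varphi$ is a well-formed frame with respect to $\mathtt{s}$, then it is an extended well-formed frame with respect to $\mathtt{s}$.
   Context: Terms over $\Sigma=\{\mathsf{enc}/3,\mathsf{dec}/2,\mathsf{enca}/3,\mathsf{deca}/2,\mathsf{pub}/1,\mathsf{priv}/1,\langle\cdot,\cdot\rangle/2,\pi_1/1,\pi_2/1,\mathsf{sign}/2,\mathsf{check}/3,\mathsf{retrieve}/1\}$, constants, names, variables; destructors are $\pi_1,\pi_2,\mathsf{dec},\mathsf{deca},\mathsf{check},\mathsf{retrieve}$. Equational theory $E$: $\pi_i(\langle z_1,z_2\rangle)=z_i$, $\mathsf{dec}(\mathsf{enc}(z_1,z_2,z_3),z_2)=z_1$, $\mathsf{deca}(\mathsf{enca}(z_1,\mathsf{pub}(z_2),z_3),\mathsf{priv}(z_2))=z_1$, $\mathsf{check}(z_1,\mathsf{sign}(z_1,\mathsf{priv}(z_2)),\mathsf{pub}(z_2))=\mathsf{ok}$, $\mathsf{retrieve}(\mathsf{sign}(z_1,z_2))=z_1$; orienting left to right gives a convergent rewrite system with normal forms. Positions: sequences of positive integers, prefix order $\le$, $T|_p$ subterm, $\mathrm{head}(T)$ root symbol. Frame $\varphi=\nu\tilde n.\sigma$: restricted names $\tilde n$, acyclic substitution $\sigma$. $\varphi\vdash M$: least relation containing $x\sigma$ ($x\in\mathrm{dom}(\sigma)$), names outside $\tilde n$,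 closed under symbols other than $\mathsf{priv}$ and under $=_E$. An encryption occurrence $q$ in $U$ (head of $U|_q$ in $\{\mathsf{enc},\mathsf{enca}\}$) is an agent encryption w.r.t. names $\tilde m$ if $U|_{q\cdot3}\in\tilde m$, a probabilistic encryption w.r.t. a set of terms $S$ if for all $V\in S$ and $p$ with $V|_p=U|_{q\cdot3}$, $p=q'\cdot3$ with $V|_{q'}=U|_q$, and it is plaintext-above a position $q_T$ if $q\cdot1\le q_T$. Well-formed w.r.t. $\mathtt{s}$: (1) every encryption in $\sigma$ is an agent encryption w.r.t. $\tilde n\setminus\{\mathtt{s}\}$ and probabilistic w.r.t. $\mathrm{ran}(\sigma)$; (2) for all subterms $\mathsf{enc}(M,K,R)$, $\mathsf{enca}(M',K',R')$, $\mathsf{sign}(U,V)$, $\mathsf{pub}(W)$, $\mathsf{priv}(W')$ of $\varphi$, $\mathtt{s}$ does not occur in $K,K',V,W,W',R,R'$; (3) no destructor occurs in $\varphi$. Extended well-formed w.r.t. $\mathtt{s}$: (1) all terms of $\sigma$ are in normal form; (2) every agent encryption w.r.t. $\tilde n$ in $\sigma$ is probabilistic w.r.t. $\mathrm{ran}(\sigma)$; (3) for every occurrence $q_{\mathtt{s}}$ of $\mathtt{s}$ in $y\sigma$, $y\in\mathrm{dom}(\sigma)$, some agent encryption w.r.t. $\tilde n\setminus\{\mathtt{s}\}$ is plaintext-above $q_{\mathtt{s}}$; (4) the lowest such encryption $q_0$ satisfies $\mathrm{head}(y\sigma|_q)\in\{\langle\rangle,\mathsf{sign}\}$ for all $q_0<q<q_{\mathtt{s}}$.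 *)

theory Defs
  imports Main
begin

type_synonym name = nat
type_synonym var = nat
type_synonym cst = string

datatype "term" =
    Name name
  | Var var
  | Const cst
  | Enc "term" "term" "term"
  | Dec "term" "term"
  | Enca "term" "term" "term"
  | Deca "term" "term"
  | Pub "term"
  | Priv "term"
  | Pair "term" "term"
  | Pi1 "term"
  | Pi2 "term"
  | Sign "term" "term"
  | Check "term" "term" "term"
  | Retrieve "term"

definition ok :: "term" where "ok = Const ''ok''"

datatype fsym = FEnc | FDec | FEnca | FDeca | FPub | FPriv | FPair | FPi1 | FPi2
  | FSign | FCheck | FRetrieve

fun head :: "term \<Rightarrow> fsym option" where
  "head (Enc a b c) = Some FEnc"
| "head (Dec a b) = Some FDec"
| "head (Enca a b c) = Some FEnca"
| "head (Deca a b) = Some FDeca"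
| "head (Pub a) = Some FPub"
| "head (Priv a) = Some FPriv"
| "head (Pair a b) = Some FPair"
| "head (Pi1 a) = Some FPi1"
| "head (Pi2 a) = Some FPi2"
| "head (Sign a b) = Some FSign"
| "head (Check a b c) = Some FCheck"
| "head (Retrieve a) = Some FRetrieve"
| "head _ = None"

fun args :: "term \<Rightarrow> term list" where
  "args (Enc a b c) = [a, b, c]"
| "args (Dec a b) = [a, b]"
| "args (Enca a b c) = [a, b, c]"
| "args (Deca a b) = [a, b]"
| "args (Pub a) = [a]"
| "args (Priv a) = [a]"
| "args (Pair a b) = [a, b]"
| "args (Pi1 a) = [a]"
| "args (Pi2 a) = [a]"
| "args (Sign a b) = [a, b]"
| "args (Check a b c) = [a, b, c]"
| "args (Retrieve a) = [a]"
| "args _ = []"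

definition destructors :: "fsym set" where
  "destructors = {FPi1, FPi2, FDec, FDeca, FCheck, FRetrieve}"

text \<open>Positions are lists of positive integers; argument indices start at 1.
  subt t p is the subterm of t at p (None if p is not a position of t).\<close>
fun subt :: "term \<Rightarrow> nat list \<Rightarrow> term option" where
  "subt t [] = Some t"
| "subt t (i # p) =
     (if 1 \<le> i \<and> i \<le> length (args t) then subt (args t ! (i - 1)) p else None)"

definition subterms :: "term \<Rightarrow> term set" where
  "subterms t = {u. \<exists>p. subt t p = Some u}"

definition occurs :: "name \<Rightarrow> term \<Rightarrow> bool" where
  "occurs n t \<longleftrightarrow> Name n \<in> subterms t"

definition pos_le :: "nat list \<Rightarrow> nat list \<Rightarrow> bool" where
  "pos_le p q \<longleftrightarrow> (\<exists>r. q = p @ r)"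

definition pos_less :: "nat list \<Rightarrow> nat list \<Rightarrow> bool" where
  "pos_less p q \<longleftrightarrow> pos_le p q \<and> p \<noteq> q"

inductive rstep :: "term \<Rightarrow> term \<Rightarrow> bool" where
  r_pi1: "rstep (Pi1 (Pair z1 z2)) z1"
| r_pi2: "rstep (Pi2 (Pair z1 z2)) z2"
| r_dec: "rstep (Dec (Enc z1 z2 z3) z2) z1"
| r_deca: "rstep (Deca (Enca z1 (Pub z2) z3) (Priv z2)) z1"
| r_check: "rstep (Check z1 (Sign z1 (Priv z2)) (Pub z2)) ok"
| r_retrieve: "rstep (Retrieve (Sign z1 z2)) z1"
| c_enc1: "rstep a a' \<Longrightarrow> rstep (Enc a b c) (Enc a' b c)"
| c_enc2: "rstep b b' \<Longrightarrow> rstep (Enc a b c) (Enc a b' c)"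
| c_enc3: "rstep c c' \<Longrightarrow> rstep (Enc a b c) (Enc a b c')"
| c_dec1: "rstep a a' \<Longrightarrow> rstep (Dec a b) (Dec a' b)"
| c_dec2: "rstep b b' \<Longrightarrow> rstep (Dec a b) (Dec a b')"
| c_enca1: "rstep a a' \<Longrightarrow> rstep (Enca a b c) (Enca a' b c)"
| c_enca2: "rstep b b' \<Longrightarrow> rstep (Enca a b c) (Enca a b' c)"
| c_enca3: "rstep c c' \<Longrightarrow> rstep (Enca a b c) (Enca a b c')"
| c_deca1: "rstep a a' \<Longrightarrow> rstep (Deca a b) (Deca a' b)"
| c_deca2: "rstep b b' \<Longrightarrow> rstep (Deca a b) (Deca a b')"
| c_pub: "rstep a a' \<Longrightarrow> rstep (Pub a) (Pub a')"
| c_priv: "rstep a a' \<Longrightarrow> rstep (Priv a) (Priv a')"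
| c_pair1: "rstep a a' \<Longrightarrow> rstep (Pair a b) (Pair a' b)"
| c_pair2: "rstep b b' \<Longrightarrow> rstep (Pair a b) (Pair a b')"
| c_pi1: "rstep a a' \<Longrightarrow> rstep (Pi1 a) (Pi1 a')"
| c_pi2: "rstep a a' \<Longrightarrow> rstep (Pi2 a) (Pi2 a')"
| c_sign1: "rstep a a' \<Longrightarrow> rstep (Sign a b) (Sign a' b)"
| c_sign2: "rstep b b' \<Longrightarrow> rstep (Sign a b) (Sign a b')"
| c_check1: "rstep a a' \<Longrightarrow> rstep (Check a b c) (Check a' b c)"
| c_check2: "rstep b b' \<Longrightarrow> rstep (Check a b c) (Check a b' c)"
| c_check3: "rstep c c' \<Longrightarrow> rstep (Check a b c) (Check a b c')"
| c_retrieve: "rstep a a' \<Longrightarrow> rstep (Retrieve a) (Retrieve a')"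

text \<open>=_E is the equivalence closure of the rewrite relation (equivalently, the
  least congruence containing the equations of E).\<close>
definition eqE :: "term \<Rightarrow> term \<Rightarrow> bool" where
  "eqE = (sup rstep rstep\<inverse>\<inverse>)\<^sup>*\<^sup>*"

definition normal_form :: "term \<Rightarrow> bool" where
  "normal_form t \<longleftrightarrow> \<not> (\<exists>u. rstep t u)"

text \<open>A frame nu ns. sigma: restricted names ns and substitution sigma.\<close>
type_synonym frame = "name set \<times> (var \<rightharpoonup> term)"

fun vars :: "term \<Rightarrow> var set" where
  "vars (Var x) = {x}"
| "vars (Name n) = {}"
| "vars (Const c) = {}"
| "vars t = (\<Union>u\<in>set (args t). vars u)"

definition acyclic_subst :: "(var \<rightharpoonup> term) \<Rightarrow> bool" where
  "acyclic_subst \<sigma> \<longleftrightarrow>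
     wf {(y, x). \<exists>t. \<sigma> x = Some t \<and> y \<in> vars t}"

definition is_frame :: "frame \<Rightarrow> bool" where
  "is_frame \<phi> \<longleftrightarrow> finite (fst \<phi>) \<and> finite (dom (snd \<phi>)) \<and> acyclic_subst (snd \<phi>)"

inductive ded :: "frame \<Rightarrow> term \<Rightarrow> bool" for \<phi> :: frame where
  d_var: "snd \<phi> x = Some t \<Longrightarrow> ded \<phi> t"
| d_name: "n \<notin> fst \<phi> \<Longrightarrow> ded \<phi> (Name n)"
| d_const: "ded \<phi> (Const c)"
| d_enc: "ded \<phi> a \<Longrightarrow> ded \<phi> b \<Longrightarrow> ded \<phi> c \<Longrightarrow> ded \<phi> (Enc a b c)"
| d_dec: "ded \<phi> a \<Longrightarrow> ded \<phi> b \<Longrightarrow> ded \<phi> (Dec a b)"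
| d_enca: "ded \<phi> a \<Longrightarrow> ded \<phi> b \<Longrightarrow> ded \<phi> c \<Longrightarrow> ded \<phi> (Enca a b c)"
| d_deca: "ded \<phi> a \<Longrightarrow> ded \<phi> b \<Longrightarrow> ded \<phi> (Deca a b)"
| d_pub: "ded \<phi> a \<Longrightarrow> ded \<phi> (Pub a)"
| d_pair: "ded \<phi> a \<Longrightarrow> ded \<phi> b \<Longrightarrow> ded \<phi> (Pair a b)"
| d_pi1: "ded \<phi> a \<Longrightarrow> ded \<phi> (Pi1 a)"
| d_pi2: "ded \<phi> a \<Longrightarrow> ded \<phi> (Pi2 a)"
| d_sign: "ded \<phi> a \<Longrightarrow> ded \<phi> b \<Longrightarrow> ded \<phi> (Sign a b)"
| d_check: "ded \<phi> a \<Longrightarrow> ded \<phi> b \<Longrightarrow> ded \<phi> c \<Longrightarrow> ded \<phi> (Check a b c)"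
| d_retrieve: "ded \<phi> a \<Longrightarrow> ded \<phi> (Retrieve a)"
| d_eq: "ded \<phi> M \<Longrightarrow> eqE M N \<Longrightarrow> ded \<phi> N"

definition enc_occ :: "term \<Rightarrow> nat list \<Rightarrow> bool" where
  "enc_occ U q \<longleftrightarrow> (\<exists>T. subt U q = Some T \<and> head T \<in> {Some FEnc, Some FEnca})"

definition agent_enc :: "name set \<Rightarrow> term \<Rightarrow> nat list \<Rightarrow> bool" where
  "agent_enc ms U q \<longleftrightarrow> enc_occ U q \<and> (\<exists>m\<in>ms. subt U (q @ [3]) = Some (Name m))"

definition prob_enc :: "term set \<Rightarrow> term \<Rightarrow> nat list \<Rightarrow> bool" where
  "prob_enc S U q \<longleftrightarrow> enc_occ U q \<and>
     (\<forall>V\<in>S. \<forall>p. subt V p = subt U (q @ [3]) \<longrightarrow>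
        (\<exists>q'. p = q' @ [3] \<and> subt V q' = subt U q))"

definition plaintext_above :: "term \<Rightarrow> nat list \<Rightarrow> nat list \<Rightarrow> bool" where
  "plaintext_above U q qT \<longleftrightarrow> enc_occ U q \<and> pos_le (q @ [1]) qT"

definition subterms_frame :: "frame \<Rightarrow> term set" where
  "subterms_frame \<phi> = (\<Union>t\<in>ran (snd \<phi>). subterms t)"

definition well_formed :: "frame \<Rightarrow> name \<Rightarrow> bool" where
  "well_formed \<phi> s \<longleftrightarrow>
    (\<forall>y t q. snd \<phi> y = Some t \<longrightarrow> enc_occ t q \<longrightarrow>
        agent_enc (fst \<phi> - {s}) t q \<and> prob_enc (ran (snd \<phi>)) t q)
  \<and> (\<forall>u\<in>subterms_frame \<phi>.
        (\<forall>M K R. u = Enc M K R \<longrightarrow> \<not> occurs s K \<and> \<not> occurs s R)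
      \<and> (\<forall>M K R. u = Enca M K R \<longrightarrow> \<not> occurs s K \<and> \<not> occurs s R)
      \<and> (\<forall>U V. u = Sign U V \<longrightarrow> \<not> occurs s V)
      \<and> (\<forall>W. u = Pub W \<longrightarrow> \<not> occurs s W)
      \<and> (\<forall>W. u = Priv W \<longrightarrow> \<not> occurs s W))
  \<and> (\<forall>u\<in>subterms_frame \<phi>. \<forall>f. head u = Some f \<longrightarrow> f \<notin> destructors)"

definition ext_well_formed :: "frame \<Rightarrow> name \<Rightarrow> bool" where
  "ext_well_formed \<phi> s \<longleftrightarrow>
    (\<forall>t\<in>ran (snd \<phi>). normal_form t)
  \<and> (\<forall>y t q. snd \<phi> y = Some t \<longrightarrow> agent_enc (fst \<phi>) t q \<longrightarrow>
        prob_enc (ran (snd \<phi>)) t q)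
  \<and> (\<forall>y t qs. snd \<phi> y = Some t \<longrightarrow> subt t qs = Some (Name s) \<longrightarrow>
        (\<exists>q. agent_enc (fst \<phi> - {s}) t q \<and> plaintext_above t q qs))
  \<and> (\<forall>y t qs q0. snd \<phi> y = Some t \<longrightarrow> subt t qs = Some (Name s) \<longrightarrow>
        agent_enc (fst \<phi> - {s}) t q0 \<longrightarrow> plaintext_above t q0 qs \<longrightarrow>
        (\<forall>q'. agent_enc (fst \<phi> - {s}) t q' \<and> plaintext_above t q' qs \<longrightarrow> pos_le q' q0) \<longrightarrow>
        (\<forall>q T. pos_less q0 q \<longrightarrow> pos_less q qs \<longrightarrow> subt t q = Some T \<longrightarrow>
            head T \<in> {Some FPair, Some FSign}))"

end

theory Submission
  imports Defs
begin

text \<open>In a well-formed frame the secret s never occurs in a key, a random seed, a signing key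
  or under pub/priv, and no destructor occurs. Hence every symbol on the path from the root of a
  frame term to an occurrence of s is a pair, or a signature or encryption entered through its
  plaintext argument. If no encryption lay above the occurrence, s could be extracted by
  projections and retrieve, contradicting the secrecy of s; for the same reason only pairs and
  signatures lie strictly between the lowest such encryption and s. The frame terms are normal
  forms because every redex has a destructor at its root.\<close>

lemma subt_append:
  "subt t (p @ q) = (case subt t p of Some u \<Rightarrow> subt u q | None \<Rightarrow> None)"
  by (induction p arbitrary: t) auto

lemma subterms_self: "t \<in> subterms t"
  unfolding subterms_def using subt.simps(1) by blast

lemma subterms_subt_closed:
  assumes "u \<in> subterms t" and "subt u q = Some v"
  shows "v \<in> subterms t"
proof -
  from assms(1) obtain p where "subt t p = Some u" unfolding subterms_def by blast
  with assms(2) have "subt t (p @ q) = Some v" by (simp add: subt_append)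
  then show ?thesis unfolding subterms_def by (intro CollectI exI)
qed

lemma subterms_argI: "a \<in> set (args t) \<Longrightarrow> v \<in> subterms a \<Longrightarrow> v \<in> subterms t"
proof -
  assume "a \<in> set (args t)" "v \<in> subterms a"
  then obtain i p where "i < length (args t)" "args t ! i = a" "subt a p = Some v"
    by (auto simp: subterms_def in_set_conv_nth)
  then have "subt t (Suc i # p) = Some v" by simp
  then show "v \<in> subterms t" unfolding subterms_def by (intro CollectI exI)
qed

lemma subterms_eq: "subterms t = insert t (\<Union>a\<in>set (args t). subterms a)"
proof
  show "subterms t \<subseteq> insert t (\<Union>a\<in>set (args t). subterms a)"
  proof
    fix v assume "v \<in> subterms t"
    then obtain p where p: "subt t p = Some v" unfolding subterms_def by blast
    show "v \<in> insert t (\<Union>a\<in>set (args t). subterms a)"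
    proof (cases p)
      case Nil then show ?thesis using p by simp
    next
      case (Cons i p')
      with p have i: "1 \<le> i \<and> i \<le> length (args t)" and v: "subt (args t ! (i - 1)) p' = Some v"
        by (simp_all split: if_splits)
      from i have "args t ! (i - 1) \<in> set (args t)" by (intro nth_mem) arith
      moreover from v have "v \<in> subterms (args t ! (i - 1))"
        unfolding subterms_def by (intro CollectI exI)
      ultimately show ?thesis by blast
    qed
  qed
  show "insert t (\<Union>a\<in>set (args t). subterms a) \<subseteq> subterms t"
    by (auto intro: subterms_self subterms_argI)
qed

lemma rstep_destructor_subterm:
  "rstep t u \<Longrightarrow> \<exists>v\<in>subterms t. \<exists>f\<in>destructors. head v = Some f"
  by (induction rule: rstep.induct) (subst subterms_eq; auto simp: destructors_def)+

lemma ded_rstep: "ded \<phi> t \<Longrightarrow> rstep t u \<Longrightarrow> ded \<phi> u"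
  by (erule d_eq) (simp add: eqE_def r_into_rtranclp)

text \<open>Positions the attacker reaches from the root using only projections and retrieve.\<close>

fun extractable :: "term \<Rightarrow> nat list \<Rightarrow> bool" where
  "extractable t [] = True"
| "extractable (Pair a b) (i # p) = (i = 1 \<and> extractable a p \<or> i = 2 \<and> extractable b p)"
| "extractable (Sign a b) (i # p) = (i = 1 \<and> extractable a p)"
| "extractable _ _ = False"

lemma ded_subt_extractable:
  "ded \<phi> t \<Longrightarrow> extractable t p \<Longrightarrow> subt t p = Some v \<Longrightarrow> ded \<phi> v"
proof (induction p arbitrary: t)
  case Nil then show ?case by simp
next
  case (Cons i p)
  show ?case
  proof (cases t)
    case (Pair a b)
    from Cons.prems(1) have "ded \<phi> a" "ded \<phi> b"
      unfolding Pair by (auto intro: ded_rstep d_pi1 d_pi2 r_pi1 r_pi2)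
    with Cons Pair show ?thesis by auto
  next
    case (Sign a b)
    from Cons.prems(1) have "ded \<phi> a"
      unfolding Sign by (auto intro: ded_rstep d_retrieve r_retrieve)
    with Cons Sign show ?thesis by auto
  qed (use Cons.prems(2) in simp_all)
qed

lemma subterms_frameI: "snd \<phi> y = Some t \<Longrightarrow> subt t q = Some u \<Longrightarrow> u \<in> subterms_frame \<phi>"
  unfolding subterms_frame_def subterms_def by (blast intro: ranI)

lemma subterms_frame_subt_closed:
  "u \<in> subterms_frame \<phi> \<Longrightarrow> subt u q = Some v \<Longrightarrow> v \<in> subterms_frame \<phi>"
  unfolding subterms_frame_def using subterms_subt_closed by blast

lemma plaintext_above_Cons:
  "subt u [i] = Some a \<Longrightarrow> plaintext_above u (i # q) (i # p) \<longleftrightarrow> plaintext_above a q p"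
  using subt_append[of u "[i]" q]
  by (simp add: plaintext_above_def enc_occ_def pos_le_def)

lemma well_formed_enc_occ:
  "well_formed \<phi> s \<Longrightarrow> snd \<phi> y = Some t \<Longrightarrow> enc_occ t q
    \<Longrightarrow> agent_enc (fst \<phi> - {s}) t q \<and> prob_enc (ran (snd \<phi>)) t q"
  unfolding well_formed_def by simp

lemma well_formed_no_destructor:
  "well_formed \<phi> s \<Longrightarrow> u \<in> subterms_frame \<phi> \<Longrightarrow> head u = Some f \<Longrightarrow> f \<notin> destructors"
  unfolding well_formed_def by (elim conjE) (drule (1) bspec, simp)

lemma well_formed_secret_parent:
  assumes wf: "well_formed \<phi> s" and u: "u \<in> subterms_frame \<phi>"
    and s: "subt u (i # p) = Some (Name s)"
  shows "head u = Some FPair \<or> head u = Some FSign \<and> i = 1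
    \<or> head u \<in> {Some FEnc, Some FEnca} \<and> i = 1"
proof -
  from s have i: "1 \<le> i" "i \<le> length (args u)" and "subt (args u ! (i - 1)) p = Some (Name s)"
    by (simp_all split: if_splits)
  then have "occurs s (args u ! (i - 1))" unfolding occurs_def subterms_def by blast
  moreover have "\<forall>f. head u = Some f \<longrightarrow> f \<notin> destructors"
    using well_formed_no_destructor[OF wf u] by blast
  moreover from wf u have
      "(\<forall>M K R. u = Enc M K R \<longrightarrow> \<not> occurs s K \<and> \<not> occurs s R)
      \<and> (\<forall>M K R. u = Enca M K R \<longrightarrow> \<not> occurs s K \<and> \<not> occurs s R)
      \<and> (\<forall>U V. u = Sign U V \<longrightarrow> \<not> occurs s V)
      \<and> (\<forall>W. u = Pub W \<longrightarrow> \<not> occurs s W)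
      \<and> (\<forall>W. u = Priv W \<longrightarrow> \<not> occurs s W)"
    unfolding well_formed_def by (elim conjE) (drule (1) bspec, simp)
  ultimately show ?thesis using i
    by (cases u) (auto simp: destructors_def numeral_eq_Suc le_Suc_eq)
qed
lemma well_formed_normal_form:
  assumes wf: "well_formed \<phi> s" and t: "t \<in> ran (snd \<phi>)"
  shows "normal_form t"
  unfolding normal_form_def
proof
  assume "\<exists>u. rstep t u"
  then obtain v f where "v \<in> subterms t" "f \<in> destructors" "head v = Some f"
    using rstep_destructor_subterm by blast
  moreover from t \<open>v \<in> subterms t\<close> have "v \<in> subterms_frame \<phi>"
    unfolding subterms_frame_def by blast
  ultimately show False using well_formed_no_destructor[OF wf] by blast
qed

lemma well_formed_extractable:
  assumes wf: "well_formed \<phi> s"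
  shows "u \<in> subterms_frame \<phi> \<Longrightarrow> subt u p = Some (Name s)
    \<Longrightarrow> \<not> (\<exists>q. plaintext_above u q p) \<Longrightarrow> extractable u p"
proof (induction p arbitrary: u)
  case Nil then show ?case by simp
next
  case (Cons i p)
  define a where "a = args u ! (i - 1)"
  from Cons.prems(2) have i: "1 \<le> i" "i \<le> length (args u)"
    and ua: "subt u [i] = Some a" and sa: "subt a p = Some (Name s)"
    by (simp_all add: a_def split: if_splits)
  have "a \<in> subterms_frame \<phi>" using subterms_frame_subt_closed[OF Cons.prems(1) ua] .
  moreover have "\<not> (\<exists>q. plaintext_above a q p)"
    using Cons.prems(3) plaintext_above_Cons[OF ua] by blast
  ultimately have "extractable a p" using Cons.IH sa by blast
  moreover have "\<not> (head u \<in> {Some FEnc, Some FEnca} \<and> i = 1)"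
  proof
    assume "head u \<in> {Some FEnc, Some FEnca} \<and> i = 1"
    then have "plaintext_above u [] (i # p)"
      by (simp add: plaintext_above_def enc_occ_def pos_le_def)
    with Cons.prems(3) show False by blast
  qed
  ultimately show ?case using well_formed_secret_parent[OF wf Cons.prems(1,2)] i
    by (cases u) (auto simp: a_def numeral_eq_Suc le_Suc_eq)
qed

lemma well_formed_secret_under_agent_enc:
  assumes wf: "well_formed \<phi> s" and secret: "\<not> ded \<phi> (Name s)"
    and y: "snd \<phi> y = Some t" and qs: "subt t qs = Some (Name s)"
  shows "\<exists>q. agent_enc (fst \<phi> - {s}) t q \<and> plaintext_above t q qs"
proof (rule ccontr)
  assume "\<not> (\<exists>q. agent_enc (fst \<phi> - {s}) t q \<and> plaintext_above t q qs)"
  then have "\<not> (\<exists>q. plaintext_above t q qs)"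
    using well_formed_enc_occ[OF wf y] unfolding plaintext_above_def by blast
  then have "extractable t qs"
    using well_formed_extractable[OF wf subterms_frameI[OF y, of "[]"]] qs by simp
  with d_var[OF y] have "ded \<phi> (Name s)" using qs by (rule ded_subt_extractable)
  with secret show False ..
qed

lemma well_formed_secret_path_below_agent_enc:
  assumes wf: "well_formed \<phi> s" and y: "snd \<phi> y = Some t" and qs: "subt t qs = Some (Name s)"
    and lowest: "\<forall>q'. agent_enc (fst \<phi> - {s}) t q' \<and> plaintext_above t q' qs \<longrightarrow> pos_le q' q0"
    and q0q: "pos_less q0 q" and qqs: "pos_less q qs" and T: "subt t q = Some T"
  shows "head T \<in> {Some FPair, Some FSign}"
proof -
  from qqs obtain i r where qs_eq: "qs = q @ i # r"
    unfolding pos_less_def pos_le_def by (metis append.right_neutral neq_Nil_conv)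
  with qs T have sT: "subt T (i # r) = Some (Name s)" by (simp add: subt_append)
  have "\<not> (head T \<in> {Some FEnc, Some FEnca} \<and> i = 1)"
  proof
    assume enc: "head T \<in> {Some FEnc, Some FEnca} \<and> i = 1"
    with T have "enc_occ t q" by (simp add: enc_occ_def)
    with enc qs_eq have "agent_enc (fst \<phi> - {s}) t q" "plaintext_above t q qs"
      using well_formed_enc_occ[OF wf y] by (auto simp: plaintext_above_def pos_le_def)
    with lowest have "pos_le q q0" by blast
    with q0q show False by (auto simp: pos_less_def pos_le_def)
  qed
  then show ?thesis using well_formed_secret_parent[OF wf subterms_frameI[OF y T] sT] by blast
qed

theorem lemma2p12:
  fixes \<phi> :: frame and s :: name
  assumes "is_frame \<phi>"
    and "s \<in> fst \<phi>"
    and "\<not> ded \<phi> (Name s)"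
    and "well_formed \<phi> s"
  shows "ext_well_formed \<phi> s"
proof -
  note wf = assms(4)
  have "\<forall>t\<in>ran (snd \<phi>). normal_form t"
    using well_formed_normal_form[OF wf] by blast
  moreover have "\<forall>y t q. snd \<phi> y = Some t \<longrightarrow> agent_enc (fst \<phi>) t q \<longrightarrow>
      prob_enc (ran (snd \<phi>)) t q"
    using well_formed_enc_occ[OF wf] unfolding agent_enc_def by blast
  moreover have "\<forall>y t qs. snd \<phi> y = Some t \<longrightarrow> subt t qs = Some (Name s) \<longrightarrow>
      (\<exists>q. agent_enc (fst \<phi> - {s}) t q \<and> plaintext_above t q qs)"
    using well_formed_secret_under_agent_enc[OF wf assms(3)] by blast
  moreover have "\<forall>y t qs q0. snd \<phi> y = Some t \<longrightarrow> subt t qs = Some (Name s) \<longrightarrow>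
      agent_enc (fst \<phi> - {s}) t q0 \<longrightarrow> plaintext_above t q0 qs \<longrightarrow>
      (\<forall>q'. agent_enc (fst \<phi> - {s}) t q' \<and> plaintext_above t q' qs \<longrightarrow> pos_le q' q0) \<longrightarrow>
      (\<forall>q T. pos_less q0 q \<longrightarrow> pos_less q qs \<longrightarrow> subt t q = Some T \<longrightarrow>
          head T \<in> {Some FPair, Some FSign})"
    using well_formed_secret_path_below_agent_enc[OF wf] by blast
  ultimately show ?thesis unfolding ext_well_formed_def by (intro conjI)
qed

end
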